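(* Assume the distribution $\mathcal D_2(\lambda)$ defined in the context. For any $\Pi\subseteq\mathbf X_1$ and any $Y\in\mathbf X_1$, \[|H(X_b\mid\Pi)-H(X_a\mid\Pi)|\le\lambda,\qquad |H(Y\mid\Pi,X_b)-H(Y\mid\Pi,X_a)|\le3\lambda.\]
   Context: Entropies use the natural logarithm; $k$ is a fixed positive integer. Scores: for a DAG (identified with its set of families $\langle Y,\Pi\rangle$, $|\Pi|\le k$) the score is $-\sum H(Y\mid\Pi)$ over its families; Markov-equivalent DAGs form equivalence classes (ECs) with a common score. Construction. $\mathcal D_1$ is a distribution over a finite set $\mathbf X_1$ of at least $k$ discrete variables, containing a variable $X_a$, such that for some $\alpha,\beta>0$: (I) among DAGs over $\mathbf X_1$ with in-degree $\le k$ there is a unique optimal EC, with score gap at least $\beta$ to the next-best EC; (II) $X_a$ has no children in any structure of the optimal EC; (III) $H(X_a\mid\mathbf X_1\setminus\{X_a\})=\alpha$. Let $\mathbf X=\mathbf X_1\cup\{X_b\}$, $d=|\mathbf X|$. For $\lambda\in(0,\min(\alpha,\beta/(3d)))$, $\mathcal D_2(\lambda)$ is a distribution on $\mathbf X$ with marginal $\mathcal D_1$ on $\mathbf X_1$ such that: (IV) there is a hidden Bernoulli variable $C$ independent of $\mathbf X_1$ with $P[X_b=X_a\mid C=1]=1$ and $X_b$ independent of $\mathbf X_1$ given $C=0$; (V) $\max(H(X_b\mid X_a),H(X_a\mid X_b))=\lambda$. *)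

theory Defs
  imports "HOL-Probability.Probability"
begin

text \<open>A distribution over variables indexed by type 'v with values in 'x is a pmf on
  assignments 'v => 'x.  proj S w restricts an assignment to the variables in S.\<close>

definition proj :: "'v set \<Rightarrow> ('v \<Rightarrow> 'x) \<Rightarrow> ('v \<Rightarrow> 'x)" where
  "proj S w = (\<lambda>v. if v \<in> S then w v else undefined)"

definition ent :: "('v \<Rightarrow> 'x) pmf \<Rightarrow> 'v set \<Rightarrow> real" where
  "ent p S = (\<Sum>y \<in> proj S ` set_pmf p.
      - measure_pmf.prob p {w. proj S w = y} * ln (measure_pmf.prob p {w. proj S w = y}))"

definition cent :: "('v \<Rightarrow> 'x) pmf \<Rightarrow> 'v set \<Rightarrow> 'v set \<Rightarrow> real" where
  "cent p Y Par = ent p (Y \<union> Par) - ent p Par"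

definition dag_edges :: "('v \<Rightarrow> 'v set) \<Rightarrow> 'v set \<Rightarrow> ('v \<times> 'v) set" where
  "dag_edges par V = {(u, v). v \<in> V \<and> u \<in> par v}"

definition is_dag :: "nat \<Rightarrow> 'v set \<Rightarrow> ('v \<Rightarrow> 'v set) \<Rightarrow> bool" where
  "is_dag k V par \<longleftrightarrow>
     (\<forall>v \<in> V. par v \<subseteq> V - {v} \<and> card (par v) \<le> k) \<and>
     (\<forall>v. v \<notin> V \<longrightarrow> par v = {}) \<and>
     acyclic (dag_edges par V)"

definition dag_adj :: "('v \<Rightarrow> 'v set) \<Rightarrow> 'v \<Rightarrow> 'v \<Rightarrow> bool" where
  "dag_adj par u v \<longleftrightarrow> u \<in> par v \<or> v \<in> par u"

definition descendants :: "('v \<Rightarrow> 'v set) \<Rightarrow> 'v set \<Rightarrow> 'v \<Rightarrow> 'v set" where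
  "descendants par V v = {w. (v, w) \<in> (dag_edges par V)\<^sup>*}"

definition is_path :: "('v \<Rightarrow> 'v set) \<Rightarrow> 'v set \<Rightarrow> 'v list \<Rightarrow> bool" where
  "is_path par V xs \<longleftrightarrow> length xs \<ge> 2 \<and> distinct xs \<and> set xs \<subseteq> V \<and>
     (\<forall>i. Suc i < length xs \<longrightarrow> dag_adj par (xs ! i) (xs ! Suc i))"

definition collider_at :: "('v \<Rightarrow> 'v set) \<Rightarrow> 'v list \<Rightarrow> nat \<Rightarrow> bool" where
  "collider_at par xs i \<longleftrightarrow> xs ! (i - 1) \<in> par (xs ! i) \<and> xs ! Suc i \<in> par (xs ! i)"

definition active_path :: "('v \<Rightarrow> 'v set) \<Rightarrow> 'v set \<Rightarrow> 'v set \<Rightarrow> 'v list \<Rightarrow> bool" where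
  "active_path par V Z xs \<longleftrightarrow> is_path par V xs \<and>
     (\<forall>i. 0 < i \<and> Suc i < length xs \<longrightarrow>
        (collider_at par xs i \<longrightarrow> descendants par V (xs ! i) \<inter> Z \<noteq> {}) \<and>
        (\<not> collider_at par xs i \<longrightarrow> xs ! i \<notin> Z))"

definition d_separated :: "('v \<Rightarrow> 'v set) \<Rightarrow> 'v set \<Rightarrow> 'v \<Rightarrow> 'v \<Rightarrow> 'v set \<Rightarrow> bool" where
  "d_separated par V x y Z \<longleftrightarrow>
     \<not> (\<exists>xs. active_path par V Z xs \<and> hd xs = x \<and> last xs = y)"

definition markov_equiv :: "'v set \<Rightarrow> ('v \<Rightarrow> 'v set) \<Rightarrow> ('v \<Rightarrow> 'v set) \<Rightarrow> bool" where
  "markov_equiv V G G' \<longleftrightarrow>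
     (\<forall>x y Z. x \<in> V \<longrightarrow> y \<in> V \<longrightarrow> x \<noteq> y \<longrightarrow> Z \<subseteq> V - {x, y} \<longrightarrow>
        (d_separated G V x y Z \<longleftrightarrow> d_separated G' V x y Z))"

definition score :: "('v \<Rightarrow> 'x) pmf \<Rightarrow> 'v set \<Rightarrow> ('v \<Rightarrow> 'v set) \<Rightarrow> real" where
  "score p V G = - (\<Sum>v \<in> V. cent p {v} (G v))"

end

theory Submission
  imports Defs
begin

text \<open>Only hypothesis (V) and the finiteness of the support are needed.
  Submodularity of entropy gives H(B,P) \<le> H(A,B,P) \<le> H(A,P) + H(B|A), i.e.
  H(B|P) - H(A|P) \<le> H(B|A) \<le> \<lambda>, and symmetrically with A and B exchanged.
  The difference H(Y|P,B) - H(Y|P,A) is the difference of two such quantities,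
  for the parent sets P \<union> {Y} and P, hence at most 2\<lambda> in absolute value.\<close>

text \<open>The weights m need not be normalised: fiber_entropy is then no longer an entropy,
  but it is still monotone and submodular.\<close>

definition fiber_mass :: "('a \<Rightarrow> real) \<Rightarrow> 'a set \<Rightarrow> ('a \<Rightarrow> 'b) \<Rightarrow> 'a \<Rightarrow> real" where
  "fiber_mass m W f w = sum m {v\<in>W. f v = f w}"

definition fiber_entropy :: "('a \<Rightarrow> real) \<Rightarrow> 'a set \<Rightarrow> ('a \<Rightarrow> 'b) \<Rightarrow> real" where
  "fiber_entropy m W f = - (\<Sum>w\<in>W. m w * ln (fiber_mass m W f w))"

lemma fiber_mass_pos:
  assumes "finite W" "\<And>v. v \<in> W \<Longrightarrow> m v > 0" "w \<in> W"
  shows "fiber_mass m W f w > 0"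
  unfolding fiber_mass_def using assms by (intro sum_pos2[of _ w]) (auto intro: less_imp_le)

lemma fiber_mass_pair_le:
  assumes "finite W" "\<And>v. v \<in> W \<Longrightarrow> m v > 0"
  shows "fiber_mass m W (\<lambda>v. (f v, g v)) w \<le> fiber_mass m W f w"
  unfolding fiber_mass_def using assms by (intro sum_mono2) (auto intro: less_imp_le)

lemma fiber_entropy_cong:
  assumes "\<And>v w. v \<in> W \<Longrightarrow> w \<in> W \<Longrightarrow> f v = f w \<longleftrightarrow> g v = g w"
  shows "fiber_entropy m W f = fiber_entropy m W g"
proof -
  have "fiber_mass m W f w = fiber_mass m W g w" if "w \<in> W" for w
    unfolding fiber_mass_def using assms that by (metis (no_types, lifting))
  then show ?thesis unfolding fiber_entropy_def by simp
qed

lemma fiber_entropy_eq_sum_image: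
  assumes "finite W"
  shows "fiber_entropy m W f =
    (\<Sum>y\<in>f ` W. - sum m {w\<in>W. f w = y} * ln (sum m {w\<in>W. f w = y}))"
proof -
  have "(\<Sum>w\<in>W. m w * ln (fiber_mass m W f w))
      = (\<Sum>y\<in>f ` W. \<Sum>w\<in>{w\<in>W. f w = y}. m w * ln (fiber_mass m W f w))"
    by (rule sum.group[symmetric]) (use assms in auto)
  also have "\<dots> = (\<Sum>y\<in>f ` W. \<Sum>w\<in>{w\<in>W. f w = y}. m w * ln (sum m {v\<in>W. f v = y}))"
    unfolding fiber_mass_def by (intro sum.cong refl) auto
  also have "\<dots> = (\<Sum>y\<in>f ` W. sum m {w\<in>W. f w = y} * ln (sum m {w\<in>W. f w = y}))"
    by (simp add: sum_distrib_right)
  finally show ?thesis unfolding fiber_entropy_def by (simp add: sum_negf)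
qed

lemma fiber_entropy_mono:
  assumes "finite W" "\<And>w. w \<in> W \<Longrightarrow> m w > 0"
  shows "fiber_entropy m W f \<le> fiber_entropy m W (\<lambda>w. (f w, g w))"
proof -
  have "m w * ln (fiber_mass m W (\<lambda>w. (f w, g w)) w) \<le> m w * ln (fiber_mass m W f w)"
    if "w \<in> W" for w
  proof -
    have "0 < fiber_mass m W (\<lambda>w. (f w, g w)) w"
      by (rule fiber_mass_pos[of W m, OF assms that])
    moreover have "fiber_mass m W (\<lambda>w. (f w, g w)) w \<le> fiber_mass m W f w"
      by (rule fiber_mass_pair_le[of W m, OF assms])
    ultimately show ?thesis
      using assms(2)[OF that] by (intro mult_left_mono) auto
  qed
  then show ?thesis unfolding fiber_entropy_def by (simp add: sum_mono)
qed

lemma sum_div_fiber_mass: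
  assumes "finite W" "\<And>w. w \<in> W \<Longrightarrow> m w > 0"
  shows "(\<Sum>w\<in>W. m w * \<phi> (t w) / fiber_mass m W t w) = (\<Sum>u\<in>t ` W. \<phi> u)"
proof -
  have "(\<Sum>w\<in>W. m w * \<phi> (t w) / fiber_mass m W t w)
      = (\<Sum>u\<in>t ` W. \<Sum>w\<in>{w\<in>W. t w = u}. m w * \<phi> (t w) / fiber_mass m W t w)"
    by (rule sum.group[symmetric]) (use assms(1) in auto)
  also have "\<dots> = (\<Sum>u\<in>t ` W. \<Sum>w\<in>{w\<in>W. t w = u}. m w * (\<phi> u / sum m {v\<in>W. t v = u}))"
    unfolding fiber_mass_def by (intro sum.cong refl) auto
  also have "\<dots> = (\<Sum>u\<in>t ` W. sum m {w\<in>W. t w = u} * (\<phi> u / sum m {v\<in>W. t v = u}))"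
    by (simp only: sum_distrib_right)
  also have "\<dots> = (\<Sum>u\<in>t ` W. \<phi> u)"
  proof (intro sum.cong refl)
    fix u assume "u \<in> t ` W"
    then obtain w where "w \<in> W" "u = t w" by blast
    then have "sum m {v\<in>W. t v = u} > 0"
      using fiber_mass_pos[of W m, OF assms] unfolding fiber_mass_def by blast
    then show "sum m {w\<in>W. t w = u} * (\<phi> u / sum m {v\<in>W. t v = u}) = \<phi> u" by simp
  qed
  finally show ?thesis .
qed

lemma sum_over_fibers:
  assumes "finite W"
  shows "(\<Sum>x\<in>k ` W. sum m {w\<in>W. P w \<and> k w = x}) = sum m {w\<in>W. P w}"
proof -
  have "sum m {w\<in>W. P w} = (\<Sum>x\<in>k ` W. sum m {w\<in>{w\<in>W. P w}. k w = x})"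
    by (rule sum.group[symmetric]) (use assms in auto)
  also have "\<dots> = (\<Sum>x\<in>k ` W. sum m {w\<in>W. P w \<and> k w = x})"
    by (intro sum.cong refl arg_cong[where f="sum m"]) auto
  finally show ?thesis by simp
qed

text \<open>The conditionally independent coupling of f and g given h has the same total mass.\<close>

lemma sum_conditional_product:
  fixes m :: "'a \<Rightarrow> real"
  assumes "finite W" "\<And>w. w \<in> W \<Longrightarrow> m w > 0"
  shows "(\<Sum>z\<in>h ` W. \<Sum>x\<in>f ` W. \<Sum>y\<in>g ` W.
            sum m {w\<in>W. h w = z \<and> f w = x} * sum m {w\<in>W. h w = z \<and> g w = y}
            / sum m {w\<in>W. h w = z}) = sum m W"
proof -
  have "(\<Sum>x\<in>f ` W. \<Sum>y\<in>g ` W.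
            sum m {w\<in>W. h w = z \<and> f w = x} * sum m {w\<in>W. h w = z \<and> g w = y}
            / sum m {w\<in>W. h w = z}) = sum m {w\<in>W. h w = z}"
    if "z \<in> h ` W" for z
  proof -
    have "sum m {w\<in>W. h w = z} > 0"
      using that fiber_mass_pos[of W m, OF assms] unfolding fiber_mass_def by blast
    then show ?thesis
      by (simp add: sum_product[symmetric] sum_divide_distrib[symmetric] sum_over_fibers[OF assms(1)])
  qed
  then have "(\<Sum>z\<in>h ` W. \<Sum>x\<in>f ` W. \<Sum>y\<in>g ` W.
            sum m {w\<in>W. h w = z \<and> f w = x} * sum m {w\<in>W. h w = z \<and> g w = y}
            / sum m {w\<in>W. h w = z}) = (\<Sum>z\<in>h ` W. sum m {w\<in>W. h w = z})"
    by (rule sum.cong[OF refl])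
  also have "\<dots> = sum m W"
    using sum_over_fibers[OF assms(1), where k=h and P="\<lambda>_. True"] by simp
  finally show ?thesis .
qed

lemma sum_fiber_mass_ratio_le:
  assumes fin: "finite W" and pos: "\<And>w. w \<in> W \<Longrightarrow> m w > 0"
  shows "(\<Sum>w\<in>W. m w * (fiber_mass m W (\<lambda>w. (f w, h w)) w
                          * fiber_mass m W (\<lambda>w. (g w, h w)) w)
            / (fiber_mass m W (\<lambda>w. (f w, g w, h w)) w * fiber_mass m W h w))
         \<le> sum m W"
proof -
  define Q where "Q x y z = sum m {w\<in>W. h w = z \<and> f w = x} * sum m {w\<in>W. h w = z \<and> g w = y}
    / sum m {w\<in>W. h w = z}" for x y z
  have Q_nonneg: "Q x y z \<ge> 0" for x y z
    unfolding Q_def using pos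
    by (intro divide_nonneg_nonneg mult_nonneg_nonneg sum_nonneg) (auto intro: less_imp_le)
  have "(\<Sum>w\<in>W. m w * (fiber_mass m W (\<lambda>w. (f w, h w)) w
                          * fiber_mass m W (\<lambda>w. (g w, h w)) w)
            / (fiber_mass m W (\<lambda>w. (f w, g w, h w)) w * fiber_mass m W h w))
      = (\<Sum>w\<in>W. m w * Q (f w) (g w) (h w) / fiber_mass m W (\<lambda>w. (f w, g w, h w)) w)"
    unfolding Q_def fiber_mass_def by (intro sum.cong refl) (simp add: conj_commute)
  also have "\<dots> = (\<Sum>(x, y, z)\<in>(\<lambda>w. (f w, g w, h w)) ` W. Q x y z)"
    using sum_div_fiber_mass[of W m, OF fin pos, where t="\<lambda>w. (f w, g w, h w)"
        and \<phi>="\<lambda>(x, y, z). Q x y z"] by simp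
  also have "\<dots> \<le> (\<Sum>(x, y, z)\<in>f ` W \<times> g ` W \<times> h ` W. Q x y z)"
    using fin Q_nonneg by (intro sum_mono2) auto
  also have "\<dots> = (\<Sum>z\<in>h ` W. \<Sum>x\<in>f ` W. \<Sum>y\<in>g ` W. Q x y z)"
    by (simp add: sum.cartesian_product[symmetric] sum.swap[of _ "h ` W"])
  also have "\<dots> = sum m W"
    unfolding Q_def by (rule sum_conditional_product[OF fin pos])
  finally show ?thesis .
qed

text \<open>By ln x \<le> x - 1 the entropy defect is bounded by the preceding sum minus the total mass.\<close>

lemma fiber_entropy_submodular:
  assumes fin: "finite W" and pos: "\<And>w. w \<in> W \<Longrightarrow> m w > 0"
  shows "fiber_entropy m W (\<lambda>w. (f w, g w, h w)) + fiber_entropy m W h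
           \<le> fiber_entropy m W (\<lambda>w. (f w, h w)) + fiber_entropy m W (\<lambda>w. (g w, h w))"
proof -
  define Pfgh Pfh Pgh Ph where
    "Pfgh = fiber_mass m W (\<lambda>w. (f w, g w, h w))" and "Pfh = fiber_mass m W (\<lambda>w. (f w, h w))"
    and "Pgh = fiber_mass m W (\<lambda>w. (g w, h w))" and "Ph = fiber_mass m W h"
  define r where "r w = Pfh w * Pgh w / (Pfgh w * Ph w)" for w
  have masses_pos: "0 < Pfgh w" "0 < Pfh w" "0 < Pgh w" "0 < Ph w" if "w \<in> W" for w
    unfolding Pfgh_def Pfh_def Pgh_def Ph_def using fin pos that by (auto intro!: fiber_mass_pos)
  have "fiber_entropy m W (\<lambda>w. (f w, g w, h w)) + fiber_entropy m W h
        - fiber_entropy m W (\<lambda>w. (f w, h w)) - fiber_entropy m W (\<lambda>w. (g w, h w))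
      = (\<Sum>w\<in>W. m w * ln (r w))"
  proof -
    have "m w * ln (r w)
        = m w * ln (Pfh w) + m w * ln (Pgh w) - m w * ln (Pfgh w) - m w * ln (Ph w)"
      if "w \<in> W" for w
      using masses_pos[OF that] unfolding r_def by (simp add: ln_mult ln_div algebra_simps)
    then show ?thesis
      unfolding fiber_entropy_def Pfgh_def Pfh_def Pgh_def Ph_def
      by (simp add: sum.distrib sum_subtractf cong: sum.cong)
  qed
  also have "\<dots> \<le> (\<Sum>w\<in>W. m w * (r w - 1))"
    using pos masses_pos unfolding r_def
    by (intro sum_mono mult_left_mono ln_le_minus_one) (auto intro: less_imp_le)
  also have "\<dots> = (\<Sum>w\<in>W. m w * r w) - sum m W"
    by (simp add: right_diff_distrib sum_subtractf)
  also have "\<dots> \<le> 0"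
    using sum_fiber_mass_ratio_le[OF fin pos, where f=f and g=g and h=h]
    unfolding r_def Pfgh_def Pfh_def Pgh_def Ph_def by (simp add: mult.assoc)
  finally show ?thesis by simp
qed

lemma proj_eq_iff: "proj S v = proj S w \<longleftrightarrow> (\<forall>x\<in>S. v x = w x)"
  unfolding proj_def fun_eq_iff by auto

lemma ent_eq_fiber_entropy:
  assumes fin: "finite (set_pmf p)"
    and "\<And>v w. proj S v = proj S w \<longleftrightarrow> f v = f w"
  shows "ent p S = fiber_entropy (pmf p) (set_pmf p) f"
proof -
  have "measure_pmf.prob p {w. proj S w = y} = sum (pmf p) {w\<in>set_pmf p. proj S w = y}" for y
  proof -
    have "measure_pmf.prob p {w. proj S w = y} = measure_pmf.prob p ({w. proj S w = y} \<inter> set_pmf p)"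
      by (simp add: measure_Int_set_pmf)
    also have "{w. proj S w = y} \<inter> set_pmf p = {w\<in>set_pmf p. proj S w = y}"
      by auto
    finally show ?thesis using fin by (simp add: measure_measure_pmf_finite)
  qed
  then have "ent p S = fiber_entropy (pmf p) (set_pmf p) (proj S)"
    unfolding ent_def fiber_entropy_eq_sum_image[OF fin] by simp
  also have "\<dots> = fiber_entropy (pmf p) (set_pmf p) f"
    by (rule fiber_entropy_cong) (simp add: assms(2))
  finally show ?thesis .
qed

lemma ent_submodular:
  assumes fin: "finite (set_pmf p)"
  shows "ent p (A \<union> B \<union> C) + ent p C \<le> ent p (A \<union> C) + ent p (B \<union> C)"
proof -
  have pos: "\<And>w. w \<in> set_pmf p \<Longrightarrow> pmf p w > 0" by (simp add: pmf_positive)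
  have "ent p (A \<union> B \<union> C) = fiber_entropy (pmf p) (set_pmf p) (\<lambda>w. (proj A w, proj B w, proj C w))"
    "ent p (A \<union> C) = fiber_entropy (pmf p) (set_pmf p) (\<lambda>w. (proj A w, proj C w))"
    "ent p (B \<union> C) = fiber_entropy (pmf p) (set_pmf p) (\<lambda>w. (proj B w, proj C w))"
    "ent p C = fiber_entropy (pmf p) (set_pmf p) (proj C)"
    by (rule ent_eq_fiber_entropy[OF fin], auto simp: proj_eq_iff)+
  then show ?thesis
    using fiber_entropy_submodular[where m="pmf p", OF fin pos, of "proj A" "proj B" "proj C"] by simp
qed

lemma ent_mono:
  assumes fin: "finite (set_pmf p)"
  shows "ent p A \<le> ent p (A \<union> B)"
proof -
  have pos: "\<And>w. w \<in> set_pmf p \<Longrightarrow> pmf p w > 0" by (simp add: pmf_positive)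
  have "ent p (A \<union> B) = fiber_entropy (pmf p) (set_pmf p) (\<lambda>w. (proj A w, proj B w))"
    "ent p A = fiber_entropy (pmf p) (set_pmf p) (proj A)"
    by (rule ent_eq_fiber_entropy[OF fin], auto simp: proj_eq_iff)+
  then show ?thesis
    using fiber_entropy_mono[where m="pmf p", OF fin pos, of "proj A" "proj B"] by simp
qed

lemma cent_diff_le_cent:
  assumes fin: "finite (set_pmf p)"
  shows "cent p {b} P - cent p {a} P \<le> cent p {b} {a}"
proof -
  have "ent p ({b} \<union> P) \<le> ent p ({b} \<union> P \<union> {a})"
    by (rule ent_mono[OF fin])
  moreover have "ent p ({b} \<union> P \<union> {a}) + ent p {a} \<le> ent p ({b} \<union> {a}) + ent p (P \<union> {a})"
    by (rule ent_submodular[OF fin])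
  moreover have "P \<union> {a} = {a} \<union> P" by auto
  ultimately show ?thesis unfolding cent_def by simp
qed

lemma abs_cent_diff_le:
  assumes "finite (set_pmf p)"
  shows "\<bar>cent p {b} P - cent p {a} P\<bar> \<le> max (cent p {b} {a}) (cent p {a} {b})"
  using cent_diff_le_cent[OF assms, of b P a] cent_diff_le_cent[OF assms, of a P b] by auto

lemma cent_insert_diff:
  "cent p {y} (P \<union> {b}) - cent p {y} (P \<union> {a})
     = (cent p {b} (insert y P) - cent p {a} (insert y P)) - (cent p {b} P - cent p {a} P)"
proof -
  have "{y} \<union> (P \<union> {b}) = {b} \<union> insert y P" "{y} \<union> (P \<union> {a}) = {a} \<union> insert y P"
    "P \<union> {b} = {b} \<union> P" "P \<union> {a} = {a} \<union> P" by auto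
  then show ?thesis unfolding cent_def by simp
qed

theorem lemma7:
  fixes p :: "('v \<Rightarrow> 'x) pmf"
    and X1 :: "'v set" and a b :: 'v and k :: nat
    and alpha beta lam :: real
  assumes fin_supp: "finite (set_pmf p)"
    and fin_X1: "finite X1" and k_pos: "0 < k" and card_X1: "k \<le> card X1"
    and a_in: "a \<in> X1" and b_notin: "b \<notin> X1"
    and alpha_pos: "0 < alpha" and beta_pos: "0 < beta"
    \<comment> \<open>(I) unique optimal EC with gap at least beta, and (II) X_a childless in it\<close>
    and opt: "\<exists>G0. is_dag k X1 G0 \<and>
               (\<forall>G. is_dag k X1 G \<longrightarrow> score p X1 G \<le> score p X1 G0) \<and>
               (\<forall>G. is_dag k X1 G \<and> \<not> markov_equiv X1 G G0 \<longrightarrow>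
                    score p X1 G \<le> score p X1 G0 - beta) \<and>
               (\<forall>G. is_dag k X1 G \<and> markov_equiv X1 G G0 \<longrightarrow>
                    (\<forall>v \<in> X1. a \<notin> G v))"
    \<comment> \<open>(III)\<close>
    and alpha_def: "cent p {a} (X1 - {a}) = alpha"
    \<comment> \<open>range of lambda, d = |X1 \<union> {X_b}|\<close>
    and lam_pos: "0 < lam" and lam_alpha: "lam < alpha"
    and lam_beta: "lam < beta / (3 * real (card (insert b X1)))"
    \<comment> \<open>(IV) hidden Bernoulli C (first component) jointly distributed with the variables\<close>
    and hidden: "\<exists>q :: (bool \<times> ('v \<Rightarrow> 'x)) pmf.
        map_pmf snd q = p \<and>
        (\<forall>A. measure_pmf.prob q {c. fst c \<and> proj X1 (snd c) \<in> A} =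
             measure_pmf.prob q {c. fst c} * measure_pmf.prob q {c. proj X1 (snd c) \<in> A}) \<and>
        (\<forall>c \<in> set_pmf q. fst c \<longrightarrow> snd c b = snd c a) \<and>
        (\<forall>u A. measure_pmf.prob q {c. \<not> fst c \<and> snd c b = u \<and> proj X1 (snd c) \<in> A} *
                 measure_pmf.prob q {c. \<not> fst c} =
               measure_pmf.prob q {c. \<not> fst c \<and> snd c b = u} *
                 measure_pmf.prob q {c. \<not> fst c \<and> proj X1 (snd c) \<in> A})"
    \<comment> \<open>(V)\<close>
    and lam_def: "max (cent p {b} {a}) (cent p {a} {b}) = lam"
  shows "\<forall>Par Y. Par \<subseteq> X1 \<longrightarrow> Y \<in> X1 \<longrightarrow>
           \<bar>cent p {b} Par - cent p {a} Par\<bar> \<le> lam \<and>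
           \<bar>cent p {Y} (Par \<union> {b}) - cent p {Y} (Par \<union> {a})\<bar> \<le> 3 * lam"
proof (intro allI impI conjI)
  fix Par Y
  have swap_bound: "\<bar>cent p {b} P - cent p {a} P\<bar> \<le> lam" for P
    using abs_cent_diff_le[OF fin_supp, of b P a] unfolding lam_def .
  then show "\<bar>cent p {b} Par - cent p {a} Par\<bar> \<le> lam" .
  have "\<bar>cent p {Y} (Par \<union> {b}) - cent p {Y} (Par \<union> {a})\<bar> \<le> 2 * lam"
    unfolding cent_insert_diff using swap_bound[of "insert Y Par"] swap_bound[of Par] by linarith
  then show "\<bar>cent p {Y} (Par \<union> {b}) - cent p {Y} (Par \<union> {a})\<bar> \<le> 3 * lam"
    using lam_pos by linarith
qed

end
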